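(* Let $\mathcal D$ be an ordered, oriented Descartes configuration with integer curvatures $(b_1,b_2,b_3,b_4)$ and let $g=\gcd(b_1,b_2,b_3,b_4)$. Then the Apollonian super-packing $\mathcal A^S[\mathcal D]$ contains a Descartes configuration whose curvature vector is a permutation of $(0,0,g,g)$ if $b_1+b_2+b_3+b_4>0$, and a permutation of $(0,0,-g,-g)$ if $b_1+b_2+b_3+b_4<0$.
   Context: Circles are taken in $\hat{\mathbb C}=\mathbb R^2\cup\{\infty\}$; lines count as circles. A Descartes configuration is a set of four mutually tangent circles with disjoint interiors; an ordered, oriented one carries an ordering and a total orientation, and the signed curvature of a circle is its reciprocal radius, negative for a circle whose interior is unbounded, $0$ for a line, with all signs reversed for negative total orientation. The curvature vector is $(b_1,\dots,b_4)^T$; it satisfies the Descartes relation $\sum b_i^2=\tfrac12(\sum b_i)^2$. Let $S_i$ be the $4\times4$ integer matrix equal to the identity except that row $i$ has $-1$ in position $i$ and $2$ in the other positions, $S_i^\perp=S_i^T$, and $\mathcal A^S=\langle S_1,\dots,S_4,S_1^\perp,\dots,S_4^\perp\rangle$ the super-Apollonian group. It acts on ordered oriented Descartes configurations by left multiplication on their augmented curvature-center coordinate matrices; in particular the curvature vector of $U[\mathcal D]$ is $U$ times the curvature vector of $\mathcal D$. The super-packing generated by $\mathcal D$ is the orbit $\mathcal A^S[\mathcal D]$. *)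

theory Defs
  imports "HOL-Analysis.Analysis"
begin

text \<open>Ordered, oriented Descartes configurations are represented by their augmented
curvature-center coordinate (ACC) matrices W (row i = circle i, columns
(curvature of the inverted circle, curvature, curvature*x, curvature*y)).
By the augmented Euclidean Descartes theorem (Lagarias-Mallows-Wilks, Thm 3.3),
a real 4x4 matrix is the ACC matrix of a (unique) ordered oriented Descartes
configuration iff  W^T Q_D W = Q_W.  Indices of type 4 are written 1,2,3,4.\<close>

definition QD :: "real^4^4" where
  "QD = (\<chi> i j. (if i = j then 1 else 0) - 1/2)"

definition QW :: "real^4^4" where
  "QW = (\<chi> i j. if (i = 1 \<and> j = 2) \<or> (i = 2 \<and> j = 1) then -4
                 else if i = j \<and> (i = 3 \<or> i = 4) then 2 else 0)"

definition descartes_config :: "real^4^4 \<Rightarrow> bool" where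
  "descartes_config W \<longleftrightarrow> transpose W ** QD ** W = QW"

definition curv :: "real^4^4 \<Rightarrow> real^4" where
  "curv W = (\<chi> i. W $ i $ 2)"

definition S_gen :: "4 \<Rightarrow> real^4^4" where
  "S_gen k = (\<chi> r c. if r = k then (if c = k then -1 else 2) else (if r = c then 1 else 0))"

definition super_gens :: "(real^4^4) set" where
  "super_gens = {S_gen k | k. True} \<union> {transpose (S_gen k) | k. True}"

text \<open>The group generated by the generators. All generators are involutions,
so the multiplicative closure (containing the identity) is the generated group.\<close>
inductive_set super_apollonian :: "(real^4^4) set" where
  id_in: "mat 1 \<in> super_apollonian"
| mult_in: "U \<in> super_apollonian \<Longrightarrow> G \<in> super_gens \<Longrightarrow> G ** U \<in> super_apollonian"

definition is_perm_of :: "real^4 \<Rightarrow> real^4 \<Rightarrow> bool" where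
  "is_perm_of x y \<longleftrightarrow> (\<exists>p. p permutes (UNIV :: 4 set) \<and> (\<forall>i. x $ i = y $ p i))"

definition vec00cc :: "real \<Rightarrow> real^4" where
  "vec00cc c = (\<chi> i. if i = 1 \<or> i = 2 then 0 else c)"

end

theory Submission
  imports Defs
begin

text \<open>Descent on the curvature sum \<open>s\<close>. The Descartes relation forces
  \<open>-s < 4 b\<^sub>k < 3 s\<close> whenever \<open>s > 0\<close>. So if some \<open>b\<^sub>k < 0\<close>, the move
  \<open>S\<^sub>k\<^sup>\<perp>\<close> lowers \<open>s\<close> to \<open>s + 4 b\<^sub>k > 0\<close>, and if some \<open>2 b\<^sub>k > s\<close>,
  the move \<open>S\<^sub>k\<close> lowers it to \<open>3 s - 4 b\<^sub>k > 0\<close>. When neither applies,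
  \<open>0 \<le> b\<^sub>k \<le> s/2\<close> for all \<open>k\<close> and the Descartes relation reads
  \<open>\<Sum>\<^sub>k b\<^sub>k (s - 2 b\<^sub>k) = 0\<close>, so the quadruple is a permutation of
  \<open>(0, 0, c, c)\<close>. The generators are integral involutions, so they preserve the gcd
  of the curvatures, whence \<open>c = g\<close>. Negative sums reduce to positive ones by negation.\<close>

definition of_int_vec :: "int^'n \<Rightarrow> 'a::ring_1^'n" where
  "of_int_vec b = (\<chi> i. of_int (b $ i))"

definition descartes_quadruple :: "'a::comm_ring_1^4 \<Rightarrow> bool" where
  "descartes_quadruple b \<longleftrightarrow> 2 * (\<Sum>i\<in>UNIV. (b $ i)\<^sup>2) = (\<Sum>i\<in>UNIV. b $ i)\<^sup>2"

definition S_act :: "4 \<Rightarrow> 'a::comm_ring_1^4 \<Rightarrow> 'a^4" where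
  "S_act k b = (\<chi> i. if i = k then 2 * ((\<Sum>j\<in>UNIV. b $ j) - b $ k) - b $ k else b $ i)"

definition S_perp_act :: "4 \<Rightarrow> 'a::comm_ring_1^4 \<Rightarrow> 'a^4" where
  "S_perp_act k b = (\<chi> i. if i = k then - b $ k else b $ i + 2 * b $ k)"

definition vec_gcd :: "'a::semiring_Gcd^'n \<Rightarrow> 'a" where
  "vec_gcd b = Gcd (range (($) b))"

lemma super_gens_preserve_QD:
  assumes "G \<in> super_gens"
  shows "transpose G ** QD ** G = QD"
proof -
  have "transpose (S_gen k) ** QD ** S_gen k = QD" "S_gen k ** QD ** transpose (S_gen k) = QD" for k
    using exhaust_4[of k]
    by (auto simp: vec_eq_iff forall_4 matrix_matrix_mult_def transpose_def S_gen_def QD_def sum_4)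
  then show ?thesis
    using assms by (auto simp: super_gens_def transpose_transpose)
qed

lemma super_gens_in_super_apollonian: "G \<in> super_gens \<Longrightarrow> G \<in> super_apollonian"
  using super_apollonian.mult_in[OF super_apollonian.id_in] by simp

lemma super_apollonian_mult:
  "U \<in> super_apollonian \<Longrightarrow> V \<in> super_apollonian \<Longrightarrow> U ** V \<in> super_apollonian"
  by (induction rule: super_apollonian.induct)
    (auto simp: matrix_mul_assoc[symmetric] intro: super_apollonian.mult_in)

lemma descartes_config_super_apollonian:
  "U \<in> super_apollonian \<Longrightarrow> descartes_config W \<Longrightarrow> descartes_config (U ** W)"
proof (induction rule: super_apollonian.induct)
  case (mult_in U G)
  have "transpose ((G ** U) ** W) ** QD ** ((G ** U) ** W)
      = transpose (U ** W) ** (transpose G ** QD ** G) ** (U ** W)"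
    by (simp only: matrix_transpose_mul matrix_mul_assoc)
  with mult_in show ?case
    by (simp add: super_gens_preserve_QD descartes_config_def)
qed simp

lemma curv_matrix_mult: "curv (U ** W) = U *v curv W"
  by (simp add: curv_def vec_eq_iff matrix_matrix_mult_def matrix_vector_mult_def)

lemma descartes_config_curv: "descartes_config W \<Longrightarrow> descartes_quadruple (curv W)"
proof -
  assume "descartes_config W"
  then have "(transpose W ** QD ** W) $ 2 $ 2 = 0"
    by (simp add: descartes_config_def QW_def)
  then show ?thesis
    by (simp add: descartes_quadruple_def matrix_matrix_mult_def transpose_def QD_def sum_4
        curv_def power2_eq_square algebra_simps)
qed

lemma S_gen_mult_vec: "S_gen k *v x = S_act k x"
  using exhaust_4[of k]
  by (auto simp: vec_eq_iff forall_4 matrix_vector_mult_def S_gen_def S_act_def sum_4)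

lemma transpose_S_gen_mult_vec: "transpose (S_gen k) *v x = S_perp_act k x"
  using exhaust_4[of k]
  by (auto simp: vec_eq_iff forall_4 vector_matrix_mult_def S_gen_def S_perp_act_def sum_4)

lemma S_act_of_int_vec: "S_act k (of_int_vec b) = of_int_vec (S_act k b)"
  by (simp add: vec_eq_iff S_act_def of_int_vec_def)

lemma S_perp_act_of_int_vec: "S_perp_act k (of_int_vec b) = of_int_vec (S_perp_act k b)"
  by (simp add: vec_eq_iff S_perp_act_def of_int_vec_def)

lemma of_int_vec_uminus: "of_int_vec (- b) = - of_int_vec b"
  by (simp add: vec_eq_iff of_int_vec_def)

lemma descartes_quadruple_of_int_vec_iff:
  "descartes_quadruple (of_int_vec b :: 'a::{comm_ring_1,ring_char_0}^4) \<longleftrightarrow> descartes_quadruple b"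
proof -
  have "descartes_quadruple (of_int_vec b :: 'a^4)
      \<longleftrightarrow> (of_int (2 * (\<Sum>i\<in>UNIV. (b $ i)\<^sup>2)) :: 'a) = of_int ((\<Sum>i\<in>UNIV. b $ i)\<^sup>2)"
    by (simp add: descartes_quadruple_def of_int_vec_def)
  then show ?thesis
    by (simp only: of_int_eq_iff descartes_quadruple_def)
qed

lemma sum_S_act: "(\<Sum>i\<in>UNIV. S_act k b $ i) = 3 * (\<Sum>i\<in>UNIV. b $ i) - 4 * b $ k"
  using exhaust_4[of k] by (auto simp: S_act_def sum_4)

lemma sum_S_perp_act: "(\<Sum>i\<in>UNIV. S_perp_act k b $ i) = (\<Sum>i\<in>UNIV. b $ i) + 4 * b $ k"
  using exhaust_4[of k] by (auto simp: S_perp_act_def sum_4)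

lemma descartes_quadruple_S_act: "descartes_quadruple b \<Longrightarrow> descartes_quadruple (S_act k b)"
  using exhaust_4[of k]
  by (auto simp: descartes_quadruple_def S_act_def sum_4 power2_eq_square algebra_simps)

lemma descartes_quadruple_S_perp_act:
  "descartes_quadruple b \<Longrightarrow> descartes_quadruple (S_perp_act k b)"
  using exhaust_4[of k]
  by (auto simp: descartes_quadruple_def S_perp_act_def sum_4 power2_eq_square algebra_simps)

lemma descartes_quadruple_uminus: "descartes_quadruple (- b) \<longleftrightarrow> descartes_quadruple b"
  by (simp add: descartes_quadruple_def sum_negf)

lemma S_act_S_act [simp]: "S_act k (S_act k b) = b"
  using exhaust_4[of k] by (auto simp: S_act_def vec_eq_iff forall_4 sum_4)

lemma S_perp_act_S_perp_act [simp]: "S_perp_act k (S_perp_act k b) = b"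
  using exhaust_4[of k] by (auto simp: S_perp_act_def vec_eq_iff forall_4)

lemma dvd_vec_gcd_iff: "d dvd vec_gcd b \<longleftrightarrow> (\<forall>i. d dvd b $ i)"
  by (simp add: vec_gcd_def dvd_Gcd_iff)

lemma vec_gcd_eqI:
  assumes "\<And>d. (\<forall>i. d dvd a $ i) \<longleftrightarrow> (\<forall>i. d dvd b $ i)"
  shows "vec_gcd a = vec_gcd b"
  using assms by (metis associated_eqI dvd_refl dvd_vec_gcd_iff normalize_Gcd vec_gcd_def)

lemma vec_gcd_eq_entry:
  assumes "\<forall>k. b $ i dvd b $ k"
  shows "vec_gcd b = normalize (b $ i)"
  unfolding vec_gcd_def using assms by (intro Gcd_eqI) auto

lemma vec_gcd_4: "vec_gcd (b :: 'a::semiring_Gcd^4) = gcd (gcd (b $ 1) (b $ 2)) (gcd (b $ 3) (b $ 4))"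
  by (simp add: vec_gcd_def UNIV_4 gcd.assoc)

lemma vec_gcd_uminus: "vec_gcd (- b :: 'a::{semiring_Gcd,comm_ring_1}^'n) = vec_gcd b"
  by (rule vec_gcd_eqI) simp

lemma vec_gcd_S_act: "vec_gcd (S_act k b) = vec_gcd (b :: 'a::{semiring_Gcd,comm_ring_1}^4)"
proof -
  have closed: "\<forall>i. d dvd S_act k c $ i" if "\<forall>i. d dvd c $ i" for d and c :: "'a^4"
    using that by (simp add: S_act_def dvd_sum)
  show ?thesis
    by (rule vec_gcd_eqI) (metis closed S_act_S_act)
qed

lemma vec_gcd_S_perp_act: "vec_gcd (S_perp_act k b) = vec_gcd (b :: 'a::{semiring_Gcd,comm_ring_1}^4)"
proof -
  have closed: "\<forall>i. d dvd S_perp_act k c $ i" if "\<forall>i. d dvd c $ i" for d and c :: "'a^4"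
    using that by (simp add: S_perp_act_def)
  show ?thesis
    by (rule vec_gcd_eqI) (metis closed S_perp_act_S_perp_act)
qed

lemma descartes_entry_bounds:
  fixes a x y z :: "'a::linordered_idom"
  assumes descartes: "2 * (a\<^sup>2 + x\<^sup>2 + y\<^sup>2 + z\<^sup>2) = (a + x + y + z)\<^sup>2"
    and pos: "0 < a + x + y + z"
  shows "0 < (a + x + y + z) + 4 * a \<and> 4 * a < 3 * (a + x + y + z)"
proof -
  define s where "s = a + x + y + z"
  have "(x + y + z)\<^sup>2 \<le> 3 * (x\<^sup>2 + y\<^sup>2 + z\<^sup>2)"
    using sum_squares_ge_zero[of "x - y" "y - z"] zero_le_power2[of "x - z"]
    by (simp add: power2_eq_square algebra_simps)
  then have "0 \<le> s\<^sup>2 + 4 * a * s - 8 * a\<^sup>2"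
    using descartes unfolding s_def by (simp add: power2_eq_square algebra_simps)
  moreover have "(3 * s - 4 * a) * (s + 4 * a) = 2 * (s\<^sup>2 + 4 * a * s - 8 * a\<^sup>2) + s\<^sup>2"
    by (simp add: power2_eq_square algebra_simps)
  moreover have "0 < s\<^sup>2"
    using pos unfolding s_def by simp
  ultimately have "0 < (3 * s - 4 * a) * (s + 4 * a)"
    by (metis add_nonneg_nonneg add_nonneg_pos mult_2)
  moreover have "0 < (3 * s - 4 * a) + (s + 4 * a)"
    using pos unfolding s_def by simp
  ultimately show ?thesis
    unfolding s_def[symmetric] by (auto simp: zero_less_mult_iff)
qed

lemma descartes_quadruple_entry_bounds:
  fixes b :: "'a::linordered_idom^4"
  assumes "descartes_quadruple b" and "0 < (\<Sum>i\<in>UNIV. b $ i)"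
  shows "0 < (\<Sum>i\<in>UNIV. b $ i) + 4 * b $ k \<and> 4 * b $ k < 3 * (\<Sum>i\<in>UNIV. b $ i)"
proof -
  obtain x y z where "(\<Sum>i\<in>UNIV. b $ i) = b $ k + x + y + z"
    and "(\<Sum>i\<in>UNIV. (b $ i)\<^sup>2) = (b $ k)\<^sup>2 + x\<^sup>2 + y\<^sup>2 + z\<^sup>2"
    using exhaust_4[of k] by (elim disjE) (force simp: sum_4 ac_simps)+
  with assms show ?thesis
    using descartes_entry_bounds[of "b $ k" x y z] by (simp add: descartes_quadruple_def)
qed

lemma reduced_descartes_quadruple:
  fixes b :: "'a::linordered_idom^4"
  defines "s \<equiv> \<Sum>i\<in>UNIV. b $ i"
  assumes "descartes_quadruple b" and "0 < s" and "\<forall>k. 0 \<le> b $ k \<and> 2 * b $ k \<le> s"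
  obtains c i j where "i \<noteq> j" and "2 * c = s" and "\<forall>k. b $ k = (if k = i \<or> k = j then c else 0)"
proof -
  have "(\<Sum>k\<in>UNIV. b $ k * (s - 2 * b $ k)) = s * (\<Sum>k\<in>UNIV. b $ k) - 2 * (\<Sum>k\<in>UNIV. (b $ k)\<^sup>2)"
    by (simp add: right_diff_distrib sum_subtractf sum_distrib_left power2_eq_square ac_simps)
  also have "\<dots> = 0"
    using assms(2) by (simp add: descartes_quadruple_def s_def power2_eq_square)
  finally have "b $ k * (s - 2 * b $ k) = 0" for k
    using assms(4) by (subst (asm) sum_nonneg_eq_0_iff) auto
  then have entry: "b $ k = 0 \<or> 2 * b $ k = s" for k
    by (metis mult_eq_0_iff right_minus_eq)
  have "2 * s = (\<Sum>k\<in>UNIV. 2 * b $ k)"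
    by (simp add: s_def sum_distrib_left)
  also have "\<dots> = (\<Sum>k\<in>UNIV. if 2 * b $ k = s then s else 0)"
    using entry by (intro sum.cong) auto
  also have "\<dots> = of_nat (card {k. 2 * b $ k = s}) * s"
    using sum.inter_filter[of UNIV "\<lambda>_. s" "\<lambda>k. 2 * b $ k = s"] by simp
  finally have "of_nat (card {k. 2 * b $ k = s}) = (2 :: 'a)"
    using \<open>0 < s\<close> by simp
  then have "card {k. 2 * b $ k = s} = 2"
    by (metis of_nat_eq_iff of_nat_numeral)
  then obtain i j where "i \<noteq> j" and ij: "{k. 2 * b $ k = s} = {i, j}"
    by (auto simp: card_2_iff)
  then have half: "2 * b $ k = s \<longleftrightarrow> k = i \<or> k = j" for k
    by blast
  have "b $ k = (if k = i \<or> k = j then b $ i else 0)" for k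
  proof (cases "k = i \<or> k = j")
    case True
    then have "2 * b $ k = 2 * b $ i"
      using half by metis
    with True show ?thesis
      by simp
  next
    case False
    then show ?thesis
      using entry[of k] half[of k] by simp
  qed
  moreover have "2 * b $ i = s"
    using half by blast
  ultimately show ?thesis
    using \<open>i \<noteq> j\<close> that by blast
qed

lemma is_perm_of_vec00cc:
  assumes "i \<noteq> j" and "\<forall>k. x $ k = (if k = i \<or> k = j then c else 0)"
  shows "is_perm_of x (vec00cc c)"
proof -
  define q where "q = Transposition.transpose i 3"
  define p where "p = Transposition.transpose (q j) 4 \<circ> q"
  have perm: "p permutes UNIV"
    by (simp add: p_def q_def permutes_compose permutes_swap_id)
  have "q j \<noteq> 3"
    using \<open>i \<noteq> j\<close> by (auto simp: q_def Transposition.transpose_def)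
  then have "p i = 3" and "p j = 4"
    by (simp_all add: p_def q_def)
  then have onto_34: "p k = 3 \<or> p k = 4 \<longleftrightarrow> k = i \<or> k = j" for k
    using permutes_inj[OF perm] by (metis injD)
  have "vec00cc c $ p k = (if k = i \<or> k = j then c else 0)" for k
    using exhaust_4[of "p k"] onto_34[of k] by (auto simp: vec00cc_def)
  with perm assms(2) show ?thesis
    unfolding is_perm_of_def by auto
qed

lemma reduced_is_perm_of_vec00cc:
  fixes b :: "int^4"
  assumes "descartes_quadruple b" and "0 < (\<Sum>i\<in>UNIV. b $ i)"
    and "\<forall>k. 0 \<le> b $ k \<and> 2 * b $ k \<le> (\<Sum>i\<in>UNIV. b $ i)"
  shows "is_perm_of (of_int_vec b) (vec00cc (of_int (vec_gcd b)))"
proof -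
  obtain c i j where "i \<noteq> j" and c: "2 * c = (\<Sum>i\<in>UNIV. b $ i)"
    and entries: "\<forall>k. b $ k = (if k = i \<or> k = j then c else 0)"
    using assms by (rule reduced_descartes_quadruple)
  have "vec_gcd b = c"
    using entries c assms(2) by (subst vec_gcd_eq_entry[of b i]) auto
  with \<open>i \<noteq> j\<close> entries show ?thesis
    by (intro is_perm_of_vec00cc) (auto simp: of_int_vec_def)
qed

lemma descartes_quadruple_descent_step:
  fixes b :: "int^4"
  assumes "descartes_quadruple b" and "0 < (\<Sum>i\<in>UNIV. b $ i)"
    and "b $ k < 0 \<or> (\<Sum>i\<in>UNIV. b $ i) < 2 * b $ k"
  obtains G b' where "G \<in> super_gens" and "G *v of_int_vec b = of_int_vec b'"
    and "descartes_quadruple b'" and "vec_gcd b' = vec_gcd b"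
    and "0 < (\<Sum>i\<in>UNIV. b' $ i)" and "(\<Sum>i\<in>UNIV. b' $ i) < (\<Sum>i\<in>UNIV. b $ i)"
proof -
  note bounds = descartes_quadruple_entry_bounds[OF assms(1,2), of k]
  show ?thesis
  proof (cases "b $ k < 0")
    case True
    show ?thesis
    proof (rule that[of "transpose (S_gen k)" "S_perp_act k b"])
      show "transpose (S_gen k) \<in> super_gens"
        by (auto simp: super_gens_def)
      show "transpose (S_gen k) *v of_int_vec b = of_int_vec (S_perp_act k b)"
        by (simp only: transpose_S_gen_mult_vec S_perp_act_of_int_vec)
    qed (use True bounds assms(1) in \<open>simp_all add: descartes_quadruple_S_perp_act
        vec_gcd_S_perp_act sum_S_perp_act\<close>)
  next
    case False
    show ?thesis
    proof (rule that[of "S_gen k" "S_act k b"])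
      show "S_gen k \<in> super_gens"
        by (auto simp: super_gens_def)
    qed (use False bounds assms in \<open>simp_all add: S_gen_mult_vec S_act_of_int_vec
        descartes_quadruple_S_act vec_gcd_S_act sum_S_act\<close>)
  qed
qed

lemma super_apollonian_reduces_to_vec00cc:
  fixes b :: "int^4"
  assumes "descartes_quadruple b" and "0 < (\<Sum>i\<in>UNIV. b $ i)"
  shows "\<exists>U\<in>super_apollonian. is_perm_of (U *v of_int_vec b) (vec00cc (of_int (vec_gcd b)))"
  using assms
proof (induction "nat (\<Sum>i\<in>UNIV. b $ i)" arbitrary: b rule: less_induct)
  case less
  show ?case
  proof (cases "\<exists>k. b $ k < 0 \<or> (\<Sum>i\<in>UNIV. b $ i) < 2 * b $ k")
    case True
    then obtain k where "b $ k < 0 \<or> (\<Sum>i\<in>UNIV. b $ i) < 2 * b $ k"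
      by blast
    with less.prems obtain G b' where G: "G \<in> super_gens" "G *v of_int_vec b = of_int_vec b'"
      and b': "descartes_quadruple b'" "vec_gcd b' = vec_gcd b"
        "0 < (\<Sum>i\<in>UNIV. b' $ i)" "(\<Sum>i\<in>UNIV. b' $ i) < (\<Sum>i\<in>UNIV. b $ i)"
      by (rule descartes_quadruple_descent_step)
    then obtain U where "U \<in> super_apollonian"
      and "is_perm_of (U *v of_int_vec b') (vec00cc (of_int (vec_gcd b)))"
      using less.hyps[of b'] by auto
    moreover have "U ** G \<in> super_apollonian"
      using \<open>U \<in> super_apollonian\<close> G(1)
      by (simp add: super_apollonian_mult super_gens_in_super_apollonian)
    moreover have "(U ** G) *v of_int_vec b = U *v of_int_vec b'"
      by (simp add: G(2) flip: matrix_vector_mul_assoc)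
    ultimately show ?thesis
      by metis
  next
    case False
    then have "is_perm_of (mat 1 *v of_int_vec b) (vec00cc (of_int (vec_gcd b)))"
      using less.prems by (simp add: not_less reduced_is_perm_of_vec00cc)
    then show ?thesis
      using super_apollonian.id_in by blast
  qed
qed

lemma is_perm_of_uminus: "is_perm_of x y \<Longrightarrow> is_perm_of (- x) (- y)"
  by (simp add: is_perm_of_def)

lemma vec00cc_uminus: "vec00cc (- c) = - vec00cc c"
  by (simp add: vec_eq_iff vec00cc_def)

lemma matrix_vector_mult_uminus_right: "A *v (- x) = - (A *v x :: 'a::ring_1^'m)"
  by (simp add: vec_eq_iff matrix_vector_mult_def sum_negf)

theorem theorem4p2:
  fixes W :: "real^4^4" and b :: "int^4"
  assumes "descartes_config W"
    and "\<forall>i. curv W $ i = of_int (b $ i)"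
  defines "g \<equiv> gcd (gcd (b $ 1) (b $ 2)) (gcd (b $ 3) (b $ 4))"
  shows "((\<Sum>i\<in>UNIV. b $ i) > 0 \<longrightarrow>
            (\<exists>U\<in>super_apollonian. descartes_config (U ** W) \<and>
                 is_perm_of (curv (U ** W)) (vec00cc (of_int g))))
       \<and> ((\<Sum>i\<in>UNIV. b $ i) < 0 \<longrightarrow>
            (\<exists>U\<in>super_apollonian. descartes_config (U ** W) \<and>
                 is_perm_of (curv (U ** W)) (vec00cc (- of_int g))))"
proof -
  have curv_W: "curv W = of_int_vec b"
    using assms(2) by (simp add: vec_eq_iff of_int_vec_def)
  then have b: "descartes_quadruple b"
    using descartes_config_curv[OF assms(1)] by (simp add: descartes_quadruple_of_int_vec_iff)
  have g: "g = vec_gcd b" "g = vec_gcd (- b)"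
    by (simp_all add: g_def vec_gcd_4 vec_gcd_uminus)
  have configs: "descartes_config (U ** W) \<and> curv (U ** W) = U *v of_int_vec b"
    if "U \<in> super_apollonian" for U
    using that assms(1) by (simp add: descartes_config_super_apollonian curv_matrix_mult curv_W)
  show ?thesis
  proof (intro conjI impI)
    assume "(\<Sum>i\<in>UNIV. b $ i) > 0"
    then show "\<exists>U\<in>super_apollonian. descartes_config (U ** W) \<and>
        is_perm_of (curv (U ** W)) (vec00cc (of_int g))"
      using super_apollonian_reduces_to_vec00cc[OF b] configs by (auto simp: g(1))
  next
    assume "(\<Sum>i\<in>UNIV. b $ i) < 0"
    then obtain U where "U \<in> super_apollonian"
      and "is_perm_of (- (U *v of_int_vec b)) (vec00cc (of_int g))"
      using super_apollonian_reduces_to_vec00cc[of "- b"] b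
      by (auto simp: sum_negf descartes_quadruple_uminus of_int_vec_uminus
          matrix_vector_mult_uminus_right g(2))
    then show "\<exists>U\<in>super_apollonian. descartes_config (U ** W) \<and>
        is_perm_of (curv (U ** W)) (vec00cc (- of_int g))"
      using configs is_perm_of_uminus by (metis minus_minus vec00cc_uminus)
  qed
qed

end
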